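(* Let $q$ be a query with sensitivity $\Delta q>0$ and let $b>0$ be a random scale parameter with $M_{1/b}(t)=\mathbb E[e^{t/b}]$. Consider the R$^2$DP Laplace mechanism $\mathcal M_q(d,b)=q(d)+\mathrm{Lap}(b)$. For every $\epsilon\ge \ln\big[\mathbb E_{1/b}(e^{\epsilon(b)})\big]=\ln M_{1/b}(\Delta q)$, where $\epsilon(b)=\Delta q/b$, and every $\gamma\ge0$, the usefulness of the R$^2$DP mechanism is at most that of the $\epsilon$-differentially private Laplace mechanism with scale $\Delta q/\epsilon$: $$\mathbb P(|\mathcal M_q(d,b)-q(d)|\le\gamma)=1-M_{1/b}(-\gamma)\ \le\ 1-e^{-\gamma\epsilon/\Delta q}.$$ Equivalently, for an R$^2$DP mechanism to improve on the usefulness of the baseline Laplace mechanism with the same privacy level, it is necessary that $$e^{\epsilon}=\frac{\mathbb E(1/b)}{M'_{1/b}(-\Delta q)}<M_{1/b}(\Delta q).$$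
   Context: $\mathrm{Lap}(b)$ is the zero-mean Laplace distribution with density $\frac{1}{2b}e^{-|x|/b}$. In an R$^2$DP Laplace mechanism the scale $b$ is random (independent of the data) and, conditionally on $b$, $\mathrm{Lap}(b)$ noise is added to $q(d)$. $\Delta q=\max|q(d)-q(d')|$ over datasets differing in one individual's data. The baseline Laplace mechanism with scale $\Delta q/\epsilon$ is $\epsilon$-differentially private and has usefulness $1-e^{-\gamma\epsilon/\Delta q}$ at error bound $\gamma$. The quantity $\mathbb E(1/b)/M'_{1/b}(-\Delta q)$ is $e^\epsilon$ for the differential-privacy level $\epsilon$ guaranteed for the R$^2$DP Laplace mechanism, where $M'_{1/b}(t)=\mathbb E[\frac1b e^{t/b}]$. *)

theory Defs
  imports "HOL-Probability.Probability"
begin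

definition laplace_density :: "real \<Rightarrow> real \<Rightarrow> real \<Rightarrow> real" where
  "laplace_density c s x = exp (- \<bar>x - c\<bar> / s) / (2 * s)"

definition laplace :: "real \<Rightarrow> real \<Rightarrow> real measure" where
  "laplace c s = density lborel (\<lambda>x. ennreal (laplace_density c s x))"

text \<open>R2DP Laplace mechanism output distribution for query value c = q(d):
  the scale is the random variable b on the probability space M, independent of the data,
  and conditionally on b, Lap(b) noise is added to c.\<close>
definition r2dp_laplace :: "'a measure \<Rightarrow> ('a \<Rightarrow> real) \<Rightarrow> real \<Rightarrow> real measure" where
  "r2dp_laplace M b c = M \<bind> (\<lambda>\<omega>. laplace c (b \<omega>))"

definition mgf_inv :: "'a measure \<Rightarrow> ('a \<Rightarrow> real) \<Rightarrow> real \<Rightarrow> real" where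
  "mgf_inv M b t = (\<integral>\<omega>. exp (t / b \<omega>) \<partial>M)"

definition mgf_inv' :: "'a measure \<Rightarrow> ('a \<Rightarrow> real) \<Rightarrow> real \<Rightarrow> real" where
  "mgf_inv' M b t = (\<integral>\<omega>. (1 / b \<omega>) * exp (t / b \<omega>) \<partial>M)"

end

theory Submission
  imports Defs
begin

text \<open>Conditionally on \<open>b\<close>, the noise stays within \<open>\<gamma>\<close> with probability \<open>1 - exp (-\<gamma>/b)\<close>,
  so the usefulness is \<open>1 - M(-\<gamma>)\<close> with \<open>M(t) = E exp (t/b)\<close>. Jensen's inequality for \<open>exp\<close>
  gives \<open>M(t) \<ge> exp (t E(1/b))\<close> for every \<open>t\<close>. At \<open>t = \<Delta>q\<close> this yields \<open>E(1/b) \<le> \<epsilon>/\<Delta>q\<close>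
  whenever \<open>\<epsilon> \<ge> ln M(\<Delta>q)\<close>, and then at \<open>t = -\<gamma>\<close> it yields \<open>M(-\<gamma>) \<ge> exp (-\<gamma>\<epsilon>/\<Delta>q)\<close>.
  The second claim is the contrapositive of the first at \<open>\<epsilon> = ln (E(1/b) / M'(-\<Delta>q))\<close>.\<close>

lemma laplace_density_has_integral_centered_interval:
  assumes s: "s > 0" and \<gamma>: "\<gamma> \<ge> 0"
  shows "(laplace_density c s has_integral 1 - exp (- \<gamma> / s)) {c - \<gamma>..c + \<gamma>}"
proof -
  have left: "(laplace_density c s has_integral 1/2 - exp (- \<gamma> / s) / 2) {c - \<gamma>..c}"
  proof -
    have "(laplace_density c s has_integral exp ((c - c) / s) / 2 - exp ((c - \<gamma> - c) / s) / 2)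
            {c - \<gamma>..c}"
    proof (rule fundamental_theorem_of_calculus)
      fix x assume "x \<in> {c - \<gamma>..c}"
      then have "laplace_density c s x = exp ((x - c) / s) / (2 * s)"
        by (simp add: laplace_density_def)
      moreover have "((\<lambda>x. exp ((x - c) / s) / 2) has_real_derivative exp ((x - c) / s) / (2 * s))
                       (at x within {c - \<gamma>..c})"
        using s by (auto intro!: derivative_eq_intros simp: field_simps)
      ultimately show "((\<lambda>x. exp ((x - c) / s) / 2) has_vector_derivative laplace_density c s x)
                         (at x within {c - \<gamma>..c})"
        by (simp add: has_real_derivative_iff_has_vector_derivative)
    qed (use \<gamma> in auto)
    then show ?thesis by simp
  qed
  have right: "(laplace_density c s has_integral 1/2 - exp (- \<gamma> / s) / 2) {c..c + \<gamma>}"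
  proof -
    have "(laplace_density c s has_integral - exp (- (c + \<gamma> - c) / s) / 2 - - exp (- (c - c) / s) / 2)
            {c..c + \<gamma>}"
    proof (rule fundamental_theorem_of_calculus)
      fix x assume "x \<in> {c..c + \<gamma>}"
      then have "laplace_density c s x = exp (- (x - c) / s) / (2 * s)"
        by (simp add: laplace_density_def)
      moreover have "((\<lambda>x. - exp (- (x - c) / s) / 2) has_real_derivative exp (- (x - c) / s) / (2 * s))
                       (at x within {c..c + \<gamma>})"
        using s by (auto intro!: derivative_eq_intros simp: field_simps)
      ultimately show "((\<lambda>x. - exp (- (x - c) / s) / 2) has_vector_derivative laplace_density c s x)
                         (at x within {c..c + \<gamma>})"
        by (simp add: has_real_derivative_iff_has_vector_derivative)
    qed (use \<gamma> in auto)
    then show ?thesis by simp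
  qed
  show ?thesis
    using has_integral_combine[OF _ _ left right] \<gamma> by simp
qed

lemma emeasure_laplace:
  assumes "A \<in> sets lborel"
  shows "emeasure (laplace c s) A = (\<integral>\<^sup>+ x \<in> A. ennreal (laplace_density c s x) \<partial>lborel)"
proof -
  have "(\<lambda>x. ennreal (laplace_density c s x)) \<in> borel_measurable lborel"
    unfolding laplace_density_def by measurable
  then show ?thesis
    unfolding laplace_def using assms by (rule emeasure_density)
qed

lemma emeasure_laplace_centered_interval:
  assumes "s > 0" and "\<gamma> \<ge> 0"
  shows "emeasure (laplace c s) {c - \<gamma>..c + \<gamma>} = ennreal (1 - exp (- \<gamma> / s))"
proof -
  have "emeasure (laplace c s) {c - \<gamma>..c + \<gamma>}
          = (\<integral>\<^sup>+ x. ennreal (laplace_density c s x) * indicator {c - \<gamma>..c + \<gamma>} x \<partial>lborel)"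
    by (simp add: emeasure_laplace)
  also have "\<dots> = ennreal (1 - exp (- \<gamma> / s))"
    using assms
    by (intro nn_integral_has_integral_lebesgue' laplace_density_has_integral_centered_interval)
       (simp_all add: laplace_density_def)
  finally show ?thesis .
qed

lemma sets_laplace [simp, measurable_cong]: "sets (laplace c s) = sets lborel"
  unfolding laplace_def by simp

lemma space_laplace [simp]: "space (laplace c s) = UNIV"
  unfolding laplace_def by simp

lemma subprob_space_laplace:
  assumes s: "s > 0"
  shows "subprob_space (laplace c s)"
proof (rule subprob_spaceI)
  define I where "I n = {c - real n..c + real n}" for n :: nat
  have "x \<in> (\<Union>n. I n)" for x
  proof -
    obtain n :: nat where "\<bar>x - c\<bar> \<le> real n"
      using real_arch_simple by blast
    then have "x \<in> I n"
      unfolding I_def by (auto simp: abs_le_iff)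
    then show ?thesis
      by blast
  qed
  then have "emeasure (laplace c s) UNIV = emeasure (laplace c s) (\<Union>n. I n)"
    by (metis UNIV_eq_I)
  also have "\<dots> = (SUP n. emeasure (laplace c s) (I n))"
    by (rule SUP_emeasure_incseq[symmetric]) (auto simp: I_def incseq_def)
  also have "\<dots> \<le> 1"
    using s by (intro SUP_least) (simp add: I_def emeasure_laplace_centered_interval ennreal_le_1)
  finally show "emeasure (laplace c s) (space (laplace c s)) \<le> 1" by simp
qed simp

lemma measurable_laplace_kernel:
  fixes b :: "'a \<Rightarrow> real"
  assumes [measurable]: "b \<in> borel_measurable M" and b_pos: "\<forall>\<omega>\<in>space M. b \<omega> > 0"
  shows "(\<lambda>\<omega>. laplace c (b \<omega>)) \<in> measurable M (subprob_algebra lborel)"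
proof (rule measurable_subprob_algebra)
  fix A :: "real set" assume A [measurable]: "A \<in> sets lborel"
  have "(\<lambda>\<omega>. \<integral>\<^sup>+ x \<in> A. ennreal (laplace_density c (b \<omega>) x) \<partial>lborel) \<in> borel_measurable M"
    unfolding laplace_density_def by measurable
  then show "(\<lambda>\<omega>. emeasure (laplace c (b \<omega>)) A) \<in> borel_measurable M"
    by (simp add: emeasure_laplace[OF A])
qed (use b_pos subprob_space_laplace in auto)

lemma integrable_exp_neg_div:
  fixes b :: "'a \<Rightarrow> real"
  assumes "prob_space M" and [measurable]: "b \<in> borel_measurable M"
    and b_pos: "\<forall>\<omega>\<in>space M. b \<omega> > 0" and "\<gamma> \<ge> 0"
  shows "integrable M (\<lambda>\<omega>. exp (- \<gamma> / b \<omega>))"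
proof -
  interpret prob_space M by fact
  show ?thesis
  proof (rule integrable_const_bound[where B = 1])
    show "AE \<omega> in M. norm (exp (- \<gamma> / b \<omega>)) \<le> 1"
      using b_pos \<open>\<gamma> \<ge> 0\<close> by (auto intro!: AE_I2 simp: divide_nonneg_pos)
  qed simp
qed

lemma mgf_inv_neg_le_one:
  fixes b :: "'a \<Rightarrow> real"
  assumes "prob_space M" and "b \<in> borel_measurable M"
    and b_pos: "\<forall>\<omega>\<in>space M. b \<omega> > 0" and "\<gamma> \<ge> 0"
  shows "mgf_inv M b (- \<gamma>) \<le> 1"
proof -
  interpret prob_space M by fact
  have "mgf_inv M b (- \<gamma>) \<le> (\<integral>\<omega>. 1 \<partial>M)"
    unfolding mgf_inv_def using assms
    by (intro integral_mono integrable_exp_neg_div) (auto simp: divide_nonneg_pos)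
  then show ?thesis
    by (simp add: prob_space)
qed

lemma measure_r2dp_laplace_centered_interval:
  fixes b :: "'a \<Rightarrow> real"
  assumes "prob_space M" and b_meas: "b \<in> borel_measurable M"
    and b_pos: "\<forall>\<omega>\<in>space M. b \<omega> > 0" and \<gamma>: "\<gamma> \<ge> 0"
  shows "measure (r2dp_laplace M b c) {y. \<bar>y - c\<bar> \<le> \<gamma>} = 1 - mgf_inv M b (- \<gamma>)"
proof -
  interpret prob_space M by fact
  have int_exp: "integrable M (\<lambda>\<omega>. exp (- \<gamma> / b \<omega>))"
    using integrable_exp_neg_div[OF \<open>prob_space M\<close> b_meas b_pos \<gamma>] .
  have "emeasure (r2dp_laplace M b c) {c - \<gamma>..c + \<gamma>}
          = (\<integral>\<^sup>+\<omega>. emeasure (laplace c (b \<omega>)) {c - \<gamma>..c + \<gamma>} \<partial>M)"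
    unfolding r2dp_laplace_def
    by (rule emeasure_bind[OF not_empty measurable_laplace_kernel[OF b_meas b_pos]]) simp
  also have "\<dots> = (\<integral>\<^sup>+\<omega>. ennreal (1 - exp (- \<gamma> / b \<omega>)) \<partial>M)"
    using b_pos \<gamma> by (intro nn_integral_cong) (simp add: emeasure_laplace_centered_interval)
  also have "\<dots> = ennreal (\<integral>\<omega>. 1 - exp (- \<gamma> / b \<omega>) \<partial>M)"
    using int_exp b_pos \<gamma>
    by (intro nn_integral_eq_integral AE_I2) (auto simp: divide_nonneg_pos)
  also have "(\<integral>\<omega>. 1 - exp (- \<gamma> / b \<omega>) \<partial>M) = 1 - mgf_inv M b (- \<gamma>)"
    using int_exp by (simp add: integral_diff mgf_inv_def prob_space)
  finally have "emeasure (r2dp_laplace M b c) {c - \<gamma>..c + \<gamma>} = ennreal (1 - mgf_inv M b (- \<gamma>))" .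
  moreover have "{y. \<bar>y - c\<bar> \<le> \<gamma>} = {c - \<gamma>..c + \<gamma>}"
    by auto
  ultimately show ?thesis
    using mgf_inv_neg_le_one[OF \<open>prob_space M\<close> b_meas b_pos \<gamma>] by (simp add: measure_def)
qed

lemma exp_mean_le_mgf_inv:
  fixes b :: "'a \<Rightarrow> real"
  assumes "prob_space M"
    and int_inv: "integrable M (\<lambda>\<omega>. 1 / b \<omega>)" and int_exp: "integrable M (\<lambda>\<omega>. exp (t / b \<omega>))"
  shows "exp (t * (\<integral>\<omega>. 1 / b \<omega> \<partial>M)) \<le> mgf_inv M b t"
proof -
  have int_lin: "integrable M (\<lambda>\<omega>. t / b \<omega>)"
    using integrable_mult_right[OF int_inv, of t] by simp
  have mean_lin: "(\<integral>\<omega>. t / b \<omega> \<partial>M) = t * (\<integral>\<omega>. 1 / b \<omega> \<partial>M)"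
    using integral_mult_right_zero[of M t "\<lambda>\<omega>. 1 / b \<omega>"] by simp
  have "exp (\<integral>\<omega>. t / b \<omega> \<partial>M) \<le> (\<integral>\<omega>. exp (t / b \<omega>) \<partial>M)"
    using int_lin int_exp exp_convex
    by (intro prob_space.jensens_inequality[OF \<open>prob_space M\<close>, where I = UNIV]) auto
  then show ?thesis
    unfolding mean_lin mgf_inv_def .
qed

lemma r2dp_laplace_usefulness_le_laplace:
  fixes b :: "'a \<Rightarrow> real"
  assumes "prob_space M" and "b \<in> borel_measurable M"
    and "\<forall>\<omega>\<in>space M. b \<omega> > 0" and "\<Delta>q > 0"
    and "integrable M (\<lambda>\<omega>. exp (\<Delta>q / b \<omega>))" and "integrable M (\<lambda>\<omega>. 1 / b \<omega>)"
    and \<epsilon>: "\<epsilon> \<ge> ln (mgf_inv M b \<Delta>q)" and "\<gamma> \<ge> 0"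
  shows "exp (- \<gamma> * \<epsilon> / \<Delta>q) \<le> mgf_inv M b (- \<gamma>)"
proof -
  define m where "m = (\<integral>\<omega>. 1 / b \<omega> \<partial>M)"
  have "exp (\<Delta>q * m) \<le> mgf_inv M b \<Delta>q"
    unfolding m_def using assms by (intro exp_mean_le_mgf_inv)
  then have "\<Delta>q * m \<le> ln (mgf_inv M b \<Delta>q)"
    using exp_gt_zero less_le_trans ln_ge_iff by blast
  then have "\<Delta>q * m \<le> \<epsilon>"
    using \<epsilon> by linarith
  then have "m \<le> \<epsilon> / \<Delta>q"
    using \<open>\<Delta>q > 0\<close> by (simp add: field_simps)
  then have "- \<gamma> * \<epsilon> / \<Delta>q \<le> - \<gamma> * m"
    using mult_left_mono_neg[of m "\<epsilon> / \<Delta>q" "- \<gamma>"] \<open>\<gamma> \<ge> 0\<close> by simp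
  then have "exp (- \<gamma> * \<epsilon> / \<Delta>q) \<le> exp (- \<gamma> * m)"
    by simp
  also have "\<dots> \<le> mgf_inv M b (- \<gamma>)"
    unfolding m_def using assms by (intro exp_mean_le_mgf_inv integrable_exp_neg_div)
  finally show ?thesis .
qed

theorem theorem4p2:
  fixes M :: "'a measure" and b :: "'a \<Rightarrow> real"
    and q :: "'d \<Rightarrow> real" and d :: 'd and \<Delta>q :: real
  assumes "prob_space M"
    and "b \<in> borel_measurable M"
    and "\<forall>\<omega>\<in>space M. b \<omega> > 0"
    and "\<Delta>q > 0"
    and "integrable M (\<lambda>\<omega>. exp (\<Delta>q / b \<omega>))"
    and "integrable M (\<lambda>\<omega>. 1 / b \<omega>)"
  shows "(\<forall>\<epsilon> \<gamma>. \<epsilon> \<ge> ln (mgf_inv M b \<Delta>q) \<and> \<gamma> \<ge> 0 \<longrightarrow>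
            measure (r2dp_laplace M b (q d)) {y. \<bar>y - q d\<bar> \<le> \<gamma>} = 1 - mgf_inv M b (- \<gamma>)
          \<and> 1 - mgf_inv M b (- \<gamma>) \<le> 1 - exp (- \<gamma> * \<epsilon> / \<Delta>q))
       \<and> ((\<exists>\<gamma>\<ge>0. measure (r2dp_laplace M b (q d)) {y. \<bar>y - q d\<bar> \<le> \<gamma>}
                 > 1 - exp (- \<gamma> * ln ((\<integral>\<omega>. 1 / b \<omega> \<partial>M) / mgf_inv' M b (- \<Delta>q)) / \<Delta>q))
          \<longrightarrow> (\<integral>\<omega>. 1 / b \<omega> \<partial>M) / mgf_inv' M b (- \<Delta>q) < mgf_inv M b \<Delta>q)"
  (is "?usefulness_bound \<and> (?improves \<longrightarrow> ?ratio < _)")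
proof -
  have bound: ?usefulness_bound
  proof (intro allI impI, elim conjE)
    fix \<epsilon> \<gamma> :: real
    assume \<epsilon>: "\<epsilon> \<ge> ln (mgf_inv M b \<Delta>q)" and \<gamma>: "\<gamma> \<ge> 0"
    show "measure (r2dp_laplace M b (q d)) {y. \<bar>y - q d\<bar> \<le> \<gamma>} = 1 - mgf_inv M b (- \<gamma>)
          \<and> 1 - mgf_inv M b (- \<gamma>) \<le> 1 - exp (- \<gamma> * \<epsilon> / \<Delta>q)"
      using measure_r2dp_laplace_centered_interval[OF assms(1-3) \<gamma>]
        r2dp_laplace_usefulness_le_laplace[OF assms \<epsilon> \<gamma>]
      by simp
  qed
  have "0 < mgf_inv M b \<Delta>q"
    using exp_gt_zero exp_mean_le_mgf_inv[OF assms(1,6,5)] by (rule less_le_trans)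
  then have "?ratio \<ge> mgf_inv M b \<Delta>q \<Longrightarrow> \<not> ?improves"
    using bound[rule_format, of "ln ?ratio"] by (auto simp: not_less)
  then show ?thesis
    using bound by force
qed

end
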